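(* The maximal adjacency cliques of $\mathcal G$ (i.e. the subsets of $\mathcal G$ consisting of mutually adjacent elements that are maximal with respect to inclusion among such subsets) are precisely the stars and the tops.
   Context: $K$ is a (not necessarily commutative) field and $V$ is a left vector space over $K$ of arbitrary (possibly infinite) dimension with $\dim V>2$. $\mathcal G:=\{X\le V\mid X\cong V/X\}$, assumed nonempty. Two elements $X,Y\in\mathcal G$ are adjacent if $\dim((X+Y)/X)=\dim((X+Y)/Y)=1$. A star is a set $\mathcal G[M\rangle:=\{E\le V\mid M\le E,\ \dim(E/M)=1\}$, where $M\le V$ is a subspace for which some $X\in\mathcal G$ satisfies $M\le X$, $\dim(X/M)=1$. A top is a set $\mathcal G\langle N]:=\{E\le V\mid E\le N,\ \dim(N/E)=1\}$, where $N\le V$ is a subspace for which some $X\in\mathcal G$ satisfies $X\le N$, $\dim(N/X)=1$. *)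

theory Defs
  imports Main
begin

text \<open>A left vector space over a (not necessarily commutative) field K, i.e. a
  division ring. The space V is the whole carrier type 'v; scalar multiplication
  is the parameter sc.\<close>

definition left_vector_space :: "('k::division_ring \<Rightarrow> 'v::ab_group_add \<Rightarrow> 'v) \<Rightarrow> bool" where
  "left_vector_space sc \<longleftrightarrow>
     (\<forall>a x y. sc a (x + y) = sc a x + sc a y) \<and>
     (\<forall>a b x. sc (a + b) x = sc a x + sc b x) \<and>
     (\<forall>a b x. sc (a * b) x = sc a (sc b x)) \<and>
     (\<forall>x. sc 1 x = x)"

definition lsubspace :: "('k::division_ring \<Rightarrow> 'v::ab_group_add \<Rightarrow> 'v) \<Rightarrow> 'v set \<Rightarrow> bool" where
  "lsubspace sc X \<longleftrightarrow> 0 \<in> X \<and> (\<forall>x\<in>X. \<forall>y\<in>X. x + y \<in> X) \<and> (\<forall>a. \<forall>x\<in>X. sc a x \<in> X)"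

definition ssum :: "'v::ab_group_add set \<Rightarrow> 'v set \<Rightarrow> 'v set" where
  "ssum X Y = {x + y | x y. x \<in> X \<and> y \<in> Y}"

text \<open>dim(E/M) = 1 for subspaces M \<le> E: the quotient E/M is spanned by one nonzero coset.\<close>
definition codim1 :: "('k::division_ring \<Rightarrow> 'v::ab_group_add \<Rightarrow> 'v) \<Rightarrow> 'v set \<Rightarrow> 'v set \<Rightarrow> bool" where
  "codim1 sc M E \<longleftrightarrow> M \<subseteq> E \<and> (\<exists>v\<in>E. v \<notin> M \<and> E = {m + sc c v | m c. m \<in> M})"

text \<open>X \<cong> V/X (V = UNIV), expressed via the first isomorphism theorem: there is a
  linear map from V onto X whose kernel is X.\<close>
definition iso_to_quotient :: "('k::division_ring \<Rightarrow> 'v::ab_group_add \<Rightarrow> 'v) \<Rightarrow> 'v set \<Rightarrow> bool" where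
  "iso_to_quotient sc X \<longleftrightarrow>
     (\<exists>f. (\<forall>x y. f (x + y) = f x + f y) \<and> (\<forall>a x. f (sc a x) = sc a (f x)) \<and>
          range f = X \<and> {v. f v = 0} = X)"

definition GG :: "('k::division_ring \<Rightarrow> 'v::ab_group_add \<Rightarrow> 'v) \<Rightarrow> 'v set set" where
  "GG sc = {X. lsubspace sc X \<and> iso_to_quotient sc X}"

definition adjacent :: "('k::division_ring \<Rightarrow> 'v::ab_group_add \<Rightarrow> 'v) \<Rightarrow> 'v set \<Rightarrow> 'v set \<Rightarrow> bool" where
  "adjacent sc X Y \<longleftrightarrow> codim1 sc X (ssum X Y) \<and> codim1 sc Y (ssum X Y)"

definition adj_clique :: "('k::division_ring \<Rightarrow> 'v::ab_group_add \<Rightarrow> 'v) \<Rightarrow> 'v set set \<Rightarrow> bool" where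
  "adj_clique sc C \<longleftrightarrow> C \<subseteq> GG sc \<and> (\<forall>X\<in>C. \<forall>Y\<in>C. X \<noteq> Y \<longrightarrow> adjacent sc X Y)"

definition max_adj_clique :: "('k::division_ring \<Rightarrow> 'v::ab_group_add \<Rightarrow> 'v) \<Rightarrow> 'v set set \<Rightarrow> bool" where
  "max_adj_clique sc C \<longleftrightarrow> adj_clique sc C \<and> (\<forall>D. adj_clique sc D \<and> C \<subseteq> D \<longrightarrow> D = C)"

definition star :: "('k::division_ring \<Rightarrow> 'v::ab_group_add \<Rightarrow> 'v) \<Rightarrow> 'v set \<Rightarrow> 'v set set" where
  "star sc M = {E. lsubspace sc E \<and> codim1 sc M E}"

definition star_base :: "('k::division_ring \<Rightarrow> 'v::ab_group_add \<Rightarrow> 'v) \<Rightarrow> 'v set \<Rightarrow> bool" where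
  "star_base sc M \<longleftrightarrow> lsubspace sc M \<and> (\<exists>X\<in>GG sc. codim1 sc M X)"

definition topset :: "('k::division_ring \<Rightarrow> 'v::ab_group_add \<Rightarrow> 'v) \<Rightarrow> 'v set \<Rightarrow> 'v set set" where
  "topset sc N = {E. lsubspace sc E \<and> codim1 sc E N}"

definition top_base :: "('k::division_ring \<Rightarrow> 'v::ab_group_add \<Rightarrow> 'v) \<Rightarrow> 'v set \<Rightarrow> bool" where
  "top_base sc N \<longleftrightarrow> lsubspace sc N \<and> (\<exists>X\<in>GG sc. codim1 sc X N)"

definition dim_gt_2 :: "('k::division_ring \<Rightarrow> 'v::ab_group_add \<Rightarrow> 'v) \<Rightarrow> bool" where
  "dim_gt_2 sc \<longleftrightarrow> (\<exists>u v w. \<forall>a b c. sc a u + sc b v + sc c w = 0 \<longrightarrow> a = 0 \<and> b = 0 \<and> c = 0)"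

end

theory Submission
  imports Defs
begin

text \<open>Members of a star \<open>\<G>[M\<rangle>\<close> or a top \<open>\<G>\<langle>N]\<close> are pairwise adjacent, and they all lie
  in \<open>\<G>\<close>: a linear automorphism fixing a hyperplane \<open>H \<supseteq> M\<close> carries one one-dimensional
  extension of \<open>M\<close> onto any other, and a top reduces to a star through \<open>X \<inter> E\<close>.
  Conversely, pairwise adjacent \<open>X, Y, Z\<close> satisfy \<open>X \<inter> Y \<subseteq> Z\<close> or \<open>Z \<subseteq> X + Y\<close>, and within a
  clique the two alternatives cannot be mixed, so a clique containing \<open>X \<noteq> Y\<close> lies in the star
  of \<open>X \<inter> Y\<close> or in the top of \<open>X + Y\<close>. Stars and tops are maximal because \<open>X \<cong> V/X\<close> and
  \<open>dim V > 2\<close> forbid a member of \<open>\<G>\<close> to be a hyperplane or a line: a subspace adjacent to the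
  whole star of \<open>M\<close> without containing \<open>M\<close> is a hyperplane, and one adjacent to the whole top
  of \<open>N\<close> without lying in \<open>N\<close> is a line.\<close>

definition span_insert :: "('k::division_ring \<Rightarrow> 'v::ab_group_add \<Rightarrow> 'v) \<Rightarrow> 'v set \<Rightarrow> 'v \<Rightarrow> 'v set" where
  "span_insert sc M v = {m + sc c v | m c. m \<in> M}"

definition lin_map :: "('k::division_ring \<Rightarrow> 'v::ab_group_add \<Rightarrow> 'v) \<Rightarrow> ('v \<Rightarrow> 'v) \<Rightarrow> bool" where
  "lin_map sc f \<longleftrightarrow> (\<forall>x y. f (x + y) = f x + f y) \<and> (\<forall>a x. f (sc a x) = sc a (f x))"

lemma homogeneous_2x3_pivot:
  fixes a1 a2 a3 b1 b2 b3 :: "'k::division_ring"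
  assumes a1: "a1 \<noteq> 0"
  shows "\<exists>\<alpha> \<beta> \<gamma>. \<not> (\<alpha> = 0 \<and> \<beta> = 0 \<and> \<gamma> = 0) \<and>
    \<alpha> * a1 + \<beta> * a2 + \<gamma> * a3 = 0 \<and> \<alpha> * b1 + \<beta> * b2 + \<gamma> * b3 = 0"
proof -
  \<comment> \<open>Gaussian elimination with pivot \<open>a1\<close>: \<open>d2, d3\<close> are the reduced coefficients.\<close>
  define d2 where "d2 = b2 - a2 * inverse a1 * b1"
  define d3 where "d3 = b3 - a3 * inverse a1 * b1"
  show ?thesis
  proof (cases "d2 = 0")
    case True
    have "(- (a2 * inverse a1)) * a1 + 1 * a2 + 0 * a3 = 0"
      using a1 by (simp add: mult.assoc)
    moreover have "(- (a2 * inverse a1)) * b1 + 1 * b2 + 0 * b3 = 0"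
      using True unfolding d2_def by (simp add: algebra_simps)
    ultimately show ?thesis by (metis one_neq_zero)
  next
    case False
    define \<beta> where "\<beta> = - (d3 * inverse d2)"
    define \<alpha> where "\<alpha> = - (\<beta> * a2 + a3) * inverse a1"
    have "\<alpha> * a1 + \<beta> * a2 + 1 * a3 = 0"
      unfolding \<alpha>_def using a1 by (simp add: mult.assoc)
    moreover have "\<alpha> * b1 + \<beta> * b2 + 1 * b3 = \<beta> * d2 + d3"
      unfolding \<alpha>_def d2_def d3_def by (simp add: algebra_simps)
    moreover have "\<beta> * d2 + d3 = 0" unfolding \<beta>_def using False by (simp add: mult.assoc)
    ultimately show ?thesis by (metis one_neq_zero)
  qed
qed

lemma homogeneous_2x3_nontrivial_solution:
  fixes a1 a2 a3 b1 b2 b3 :: "'k::division_ring"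
  shows "\<exists>\<alpha> \<beta> \<gamma>. \<not> (\<alpha> = 0 \<and> \<beta> = 0 \<and> \<gamma> = 0) \<and>
    \<alpha> * a1 + \<beta> * a2 + \<gamma> * a3 = 0 \<and> \<alpha> * b1 + \<beta> * b2 + \<gamma> * b3 = 0"
proof (cases "a1 = 0 \<and> b1 = 0")
  case True
  then show ?thesis by (intro exI[of _ 1] exI[of _ 0]) simp
next
  case False
  then show ?thesis
    using homogeneous_2x3_pivot[of a1] homogeneous_2x3_pivot[of b1 b2 b3 a1 a2 a3] by metis
qed

locale lvspace =
  fixes sc :: "'k::division_ring \<Rightarrow> 'v::ab_group_add \<Rightarrow> 'v"
  assumes left_vector_space: "left_vector_space sc"
begin

lemma scale_right_distrib: "sc a (x + y) = sc a x + sc a y"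
  and scale_left_distrib: "sc (a + b) x = sc a x + sc b x"
  and scale_scale: "sc (a * b) x = sc a (sc b x)"
  and scale_one [simp]: "sc 1 x = x"
  using left_vector_space unfolding left_vector_space_def by blast+

lemma scale_zero_left [simp]: "sc 0 x = 0"
  using scale_left_distrib[of 0 0 x] by simp

lemma scale_zero_right [simp]: "sc a 0 = 0"
  using scale_right_distrib[of a 0 0] by simp

lemma scale_minus_left: "sc (- a) x = - sc a x"
  using scale_left_distrib[of "-a" a x] by (simp add: eq_neg_iff_add_eq_0)

lemma scale_minus_right: "sc a (- x) = - sc a x"
  using scale_right_distrib[of a "-x" x] by (simp add: eq_neg_iff_add_eq_0)

lemma scale_right_diff_distrib: "sc a (x - y) = sc a x - sc a y"
  using scale_right_distrib[of a x "-y"] scale_minus_right[of a y] by simp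

lemma scale_left_diff_distrib: "sc (a - b) x = sc a x - sc b x"
  using scale_left_distrib[of a "-b" x] scale_minus_left[of b x] by simp

lemma scale_inverse_cancel: "c \<noteq> 0 \<Longrightarrow> sc (inverse c) (sc c x) = x"
  using scale_scale[of "inverse c" c x] by simp

lemma lsubspace_0: "lsubspace sc S \<Longrightarrow> 0 \<in> S"
  and lsubspace_add: "lsubspace sc S \<Longrightarrow> x \<in> S \<Longrightarrow> y \<in> S \<Longrightarrow> x + y \<in> S"
  and lsubspace_scale: "lsubspace sc S \<Longrightarrow> x \<in> S \<Longrightarrow> sc a x \<in> S"
  unfolding lsubspace_def by blast+

lemma lsubspace_minus: "lsubspace sc S \<Longrightarrow> x \<in> S \<Longrightarrow> - x \<in> S"
  using lsubspace_scale[of S x "-1"] scale_minus_left[of 1 x] by simp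

lemma lsubspace_diff: "lsubspace sc S \<Longrightarrow> x \<in> S \<Longrightarrow> y \<in> S \<Longrightarrow> x - y \<in> S"
  using lsubspace_add[of S x "-y"] lsubspace_minus[of S y] by simp

lemma lsubspace_UNIV: "lsubspace sc UNIV"
  and lsubspace_zero: "lsubspace sc {0}"
  and lsubspace_Int: "lsubspace sc S \<Longrightarrow> lsubspace sc T \<Longrightarrow> lsubspace sc (S \<inter> T)"
  unfolding lsubspace_def by auto

lemma lsubspace_scale_iff:
  assumes "lsubspace sc S" "c \<noteq> 0"
  shows "sc c x \<in> S \<longleftrightarrow> x \<in> S"
  using lsubspace_scale[OF assms(1), of _ "inverse c"] lsubspace_scale[OF assms(1)]
    scale_inverse_cancel[OF assms(2)] by metis

subsection \<open>Extending a subspace by one vector\<close>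

lemma span_insertI: "m \<in> M \<Longrightarrow> m + sc c v \<in> span_insert sc M v"
  unfolding span_insert_def by blast

lemma span_insertE:
  "w \<in> span_insert sc M v \<Longrightarrow> (\<And>m c. m \<in> M \<Longrightarrow> w = m + sc c v \<Longrightarrow> P) \<Longrightarrow> P"
  unfolding span_insert_def by blast

lemma lsubspace_span_insert:
  assumes M: "lsubspace sc M"
  shows "lsubspace sc (span_insert sc M v)"
  unfolding lsubspace_def
proof (intro conjI ballI allI)
  show "0 \<in> span_insert sc M v"
    using span_insertI[OF lsubspace_0[OF M], of 0 v] by simp
next
  fix x y assume "x \<in> span_insert sc M v" "y \<in> span_insert sc M v"
  then obtain m1 c1 m2 c2 where "m1 \<in> M" "m2 \<in> M" "x = m1 + sc c1 v" "y = m2 + sc c2 v"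
    by (metis span_insertE)
  then have "x + y = (m1 + m2) + sc (c1 + c2) v" and "m1 + m2 \<in> M"
    by (simp_all add: scale_left_distrib lsubspace_add[OF M] algebra_simps)
  then show "x + y \<in> span_insert sc M v" by (metis span_insertI)
next
  fix a x assume "x \<in> span_insert sc M v"
  then obtain m c where "m \<in> M" "x = m + sc c v" by (rule span_insertE)
  then have "sc a x = sc a m + sc (a * c) v" and "sc a m \<in> M"
    by (simp_all add: scale_right_distrib scale_scale lsubspace_scale[OF M])
  then show "sc a x \<in> span_insert sc M v" by (metis span_insertI)
qed

lemma subset_span_insert: "M \<subseteq> span_insert sc M v"
  using span_insertI[of _ M 0 v] by auto

lemma in_span_insert: "lsubspace sc M \<Longrightarrow> v \<in> span_insert sc M v"
  using span_insertI[OF lsubspace_0, of M 1 v] by simp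

lemma span_insert_least: "lsubspace sc F \<Longrightarrow> M \<subseteq> F \<Longrightarrow> v \<in> F \<Longrightarrow> span_insert sc M v \<subseteq> F"
  unfolding span_insert_def using lsubspace_add lsubspace_scale by blast

lemma span_insert_coeff_zero:
  assumes "lsubspace sc M" "v \<notin> M" "m \<in> M" "m + sc c v \<in> M"
  shows "c = 0"
proof (rule ccontr)
  assume "c \<noteq> 0"
  moreover have "sc c v \<in> M" using lsubspace_diff[OF assms(1) assms(4) assms(3)] by simp
  ultimately show False using lsubspace_scale_iff[OF assms(1)] assms(2) by blast
qed

lemma span_insert_exchange:
  assumes M: "lsubspace sc M" and "w \<in> span_insert sc M v" "w \<notin> M"
  shows "v \<in> span_insert sc M w"
proof -
  obtain m c where m: "m \<in> M" "w = m + sc c v" using assms(2) by (rule span_insertE)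
  have c: "c \<noteq> 0" using m assms(3) by auto
  have "v = sc (inverse c) (- m) + sc (inverse c) w"
    using scale_right_distrib[of "inverse c" "-m" w] m scale_inverse_cancel[OF c, of v] by simp
  then show ?thesis
    using span_insertI[OF lsubspace_scale[OF M lsubspace_minus[OF M m(1)]]] by metis
qed

lemma span_insert_exchange_eq:
  assumes "lsubspace sc M" "w \<in> span_insert sc M v" "w \<notin> M"
  shows "span_insert sc M w = span_insert sc M v"
  using span_insert_least[OF lsubspace_span_insert[OF assms(1)] subset_span_insert]
    assms(2) span_insert_exchange[OF assms] by blast

lemma codim1_iff_span_insert:
  "codim1 sc M E \<longleftrightarrow> M \<subseteq> E \<and> (\<exists>v\<in>E. v \<notin> M \<and> E = span_insert sc M v)"
  unfolding codim1_def span_insert_def by simp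

lemma codim1_span_insert: "lsubspace sc M \<Longrightarrow> v \<notin> M \<Longrightarrow> codim1 sc M (span_insert sc M v)"
  unfolding codim1_iff_span_insert using subset_span_insert in_span_insert by blast

lemma codim1_lsubspace: "lsubspace sc M \<Longrightarrow> codim1 sc M E \<Longrightarrow> lsubspace sc E"
  unfolding codim1_iff_span_insert using lsubspace_span_insert by blast

lemma codim1_eq_span_insert:
  assumes "lsubspace sc M" "codim1 sc M E" "w \<in> E" "w \<notin> M"
  shows "E = span_insert sc M w"
  using assms span_insert_exchange_eq[OF assms(1)] unfolding codim1_iff_span_insert by metis

lemma codim1_no_between:
  assumes E: "lsubspace sc E" "codim1 sc E N" and F: "lsubspace sc F" "E \<subseteq> F" "F \<subseteq> N"
    and "w \<in> F" "w \<notin> E"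
  shows "F = N"
  using codim1_eq_span_insert[OF E] span_insert_least[OF F(1,2)] assms(5-7) by blast

subsection \<open>Adjacency\<close>

lemma lsubspace_ssum:
  assumes X: "lsubspace sc X" and Y: "lsubspace sc Y"
  shows "lsubspace sc (ssum X Y)"
  unfolding lsubspace_def ssum_def
proof (intro conjI ballI allI)
  show "0 \<in> {x + y |x y. x \<in> X \<and> y \<in> Y}" using lsubspace_0[OF X] lsubspace_0[OF Y] by force
next
  fix a b assume "a \<in> {x + y |x y. x \<in> X \<and> y \<in> Y}" "b \<in> {x + y |x y. x \<in> X \<and> y \<in> Y}"
  then obtain x1 y1 x2 y2 where "a = x1 + y1" "b = x2 + y2" "x1 \<in> X" "x2 \<in> X" "y1 \<in> Y" "y2 \<in> Y"
    by blast
  then have "a + b = (x1 + x2) + (y1 + y2)" "x1 + x2 \<in> X" "y1 + y2 \<in> Y"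
    by (simp_all add: lsubspace_add X Y algebra_simps)
  then show "a + b \<in> {x + y |x y. x \<in> X \<and> y \<in> Y}" by blast
next
  fix c a assume "a \<in> {x + y |x y. x \<in> X \<and> y \<in> Y}"
  then obtain x y where "a = x + y" "x \<in> X" "y \<in> Y" by blast
  then have "sc c a = sc c x + sc c y" "sc c x \<in> X" "sc c y \<in> Y"
    by (simp_all add: scale_right_distrib lsubspace_scale X Y)
  then show "sc c a \<in> {x + y |x y. x \<in> X \<and> y \<in> Y}" by blast
qed

lemma ssum_upper1: "lsubspace sc Y \<Longrightarrow> X \<subseteq> ssum X Y"
  and ssum_upper2: "lsubspace sc X \<Longrightarrow> Y \<subseteq> ssum X Y"
  unfolding ssum_def using lsubspace_0 by force+

lemma ssum_least: "lsubspace sc F \<Longrightarrow> X \<subseteq> F \<Longrightarrow> Y \<subseteq> F \<Longrightarrow> ssum X Y \<subseteq> F"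
  unfolding ssum_def using lsubspace_add by blast

lemma ssum_commute: "ssum X Y = ssum Y X"
  unfolding ssum_def by (auto, metis add.commute, metis add.commute)

lemma adjacent_sym: "adjacent sc X Z \<Longrightarrow> adjacent sc Z X"
  unfolding adjacent_def by (simp add: ssum_commute)

lemma adjacent_not_subset:
  assumes "lsubspace sc Z" "adjacent sc X Z"
  shows "\<not> X \<subseteq> Z"
  using assms ssum_least[OF assms(1) _ order_refl, of X] unfolding adjacent_def codim1_def by blast

lemma adjacent_ssum_eq:
  assumes "lsubspace sc Y" "lsubspace sc E" "adjacent sc Y E" "m \<in> E" "m \<notin> Y"
  shows "ssum Y E = span_insert sc Y m"
  using codim1_eq_span_insert[OF assms(1)] ssum_upper2[OF assms(1)] assms(3-5)
  unfolding adjacent_def by blast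

lemma adjacent_codim1_Int:
  assumes X: "lsubspace sc X" and Z: "lsubspace sc Z" and XZ: "adjacent sc X Z"
  shows "codim1 sc (X \<inter> Z) X"
proof -
  obtain x where x: "x \<in> X" "x \<notin> Z"
    using adjacent_not_subset[OF Z XZ] by blast
  have sum: "ssum Z X = span_insert sc Z x"
    using adjacent_ssum_eq[OF Z X adjacent_sym[OF XZ] x] .
  have "X \<subseteq> span_insert sc (X \<inter> Z) x"
  proof
    fix y assume y: "y \<in> X"
    then have "y \<in> span_insert sc Z x" using sum ssum_upper2[OF Z] by blast
    then obtain z c where zc: "z \<in> Z" "y = z + sc c x" by (rule span_insertE)
    then have "z \<in> X" using lsubspace_diff[OF X y lsubspace_scale[OF X x(1)], of c] by simp
    then show "y \<in> span_insert sc (X \<inter> Z) x" using zc span_insertI by blast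
  qed
  moreover have "span_insert sc (X \<inter> Z) x \<subseteq> X" using span_insert_least[OF X _ x(1)] by blast
  ultimately show ?thesis unfolding codim1_iff_span_insert using x by blast
qed

lemma lsubspace_Union_chain:
  assumes "C \<noteq> {}" "\<forall>S\<in>C. lsubspace sc S" "\<forall>S\<in>C. \<forall>T\<in>C. S \<subseteq> T \<or> T \<subseteq> S"
  shows "lsubspace sc (\<Union>C)"
  unfolding lsubspace_def
proof (intro conjI ballI allI)
  show "0 \<in> \<Union>C" using assms(1,2) lsubspace_0 by blast
next
  fix u v assume "u \<in> \<Union>C" "v \<in> \<Union>C"
  then obtain S T where ST: "S \<in> C" "T \<in> C" "u \<in> S" "v \<in> T" by blast
  then consider "S \<subseteq> T" | "T \<subseteq> S" using assms(3) by blast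
  then show "u + v \<in> \<Union>C"
    by cases (use ST assms(2) lsubspace_add[of T u v] lsubspace_add[of S u v] in blast)+
next
  fix a u assume "u \<in> \<Union>C"
  then obtain S where "S \<in> C" "u \<in> S" by blast
  then show "sc a u \<in> \<Union>C" using assms(2) lsubspace_scale[of S u a] by blast
qed

lemma exists_hyperplane_avoiding:
  assumes N: "lsubspace sc N" and S0: "lsubspace sc S0" "S0 \<subseteq> N" and x: "x \<in> N" "x \<notin> S0"
  shows "\<exists>H. lsubspace sc H \<and> S0 \<subseteq> H \<and> H \<subseteq> N \<and> x \<notin> H \<and> N = span_insert sc H x"
proof -
  let ?A = "{S. lsubspace sc S \<and> S0 \<subseteq> S \<and> S \<subseteq> N \<and> x \<notin> S}"
  have "\<exists>H\<in>?A. \<forall>S\<in>?A. H \<subseteq> S \<longrightarrow> S = H"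
  proof (rule subset_Zorn_nonempty)
    show "?A \<noteq> {}" using assms by blast
  next
    fix C assume C: "C \<noteq> {}" "subset.chain ?A C"
    have CA: "C \<subseteq> ?A" using C(2) unfolding subset.chain_def by blast
    have "lsubspace sc (\<Union>C)"
      using lsubspace_Union_chain[OF C(1)] C(2) unfolding subset.chain_def by blast
    moreover have "S0 \<subseteq> \<Union>C" "\<Union>C \<subseteq> N" "x \<notin> \<Union>C"
      using C(1) CA by blast+
    ultimately show "\<Union>C \<in> ?A" by simp
  qed
  then obtain H where HA: "H \<in> ?A" and max0: "\<forall>S\<in>?A. H \<subseteq> S \<longrightarrow> S = H"
    by (rule bexE)
  have max: "S = H" if "S \<in> ?A" "H \<subseteq> S" for S using max0 that by blast
  from HA have H: "lsubspace sc H" "S0 \<subseteq> H" "H \<subseteq> N" "x \<notin> H" by simp_all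
  have "N \<subseteq> span_insert sc H x"
  proof
    fix w assume w: "w \<in> N"
    show "w \<in> span_insert sc H x"
    proof (rule ccontr)
      assume nw: "w \<notin> span_insert sc H x"
      then have "x \<notin> span_insert sc H w"
        using span_insert_exchange[OF H(1)] H(4) by blast
      moreover have "S0 \<subseteq> span_insert sc H w" using H(2) subset_span_insert by blast
      ultimately have "span_insert sc H w \<in> ?A"
        using lsubspace_span_insert[OF H(1)] span_insert_least[OF N H(3) w] by simp
      then have "span_insert sc H w = H" using max subset_span_insert by blast
      then show False using in_span_insert[OF H(1)] subset_span_insert nw by blast
    qed
  qed
  then show ?thesis using H span_insert_least[OF N H(3) x(1)] by blast
qed

subsection \<open>Linear automorphisms and the class \<open>\<G>\<close>\<close>

lemma
  assumes "lin_map sc f"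
  shows lin_map_add: "f (x + y) = f x + f y" and lin_map_scale: "f (sc a x) = sc a (f x)"
  using assms unfolding lin_map_def by blast+

lemma lin_map_0: "lin_map sc f \<Longrightarrow> f 0 = 0"
  using lin_map_add[of f 0 0] by simp

lemma lin_map_comp: "lin_map sc f \<Longrightarrow> lin_map sc g \<Longrightarrow> lin_map sc (f \<circ> g)"
  unfolding lin_map_def by simp

lemma lsubspace_kernel:
  assumes "lin_map sc f"
  shows "lsubspace sc {v. f v = 0}"
  unfolding lsubspace_def using lin_map_add[OF assms] lin_map_scale[OF assms] lin_map_0[OF assms]
  by simp

lemma GG_iff: "X \<in> GG sc \<longleftrightarrow> (\<exists>f. lin_map sc f \<and> range f = X \<and> {v. f v = 0} = X)"
proof
  assume "\<exists>f. lin_map sc f \<and> range f = X \<and> {v. f v = 0} = X"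
  then obtain f where f: "lin_map sc f" "range f = X" "{v. f v = 0} = X" by blast
  then have "lsubspace sc X" using lsubspace_kernel by metis
  with f show "X \<in> GG sc" unfolding GG_def iso_to_quotient_def lin_map_def by blast
qed (auto simp: GG_def iso_to_quotient_def lin_map_def)

lemma GG_lsubspace: "X \<in> GG sc \<Longrightarrow> lsubspace sc X"
  unfolding GG_def by blast

lemma GG_image_lin_iso:
  assumes f: "lin_map sc f" and g: "lin_map sc g"
    and gf: "\<And>u. g (f u) = u" and fg: "\<And>u. f (g u) = u"
    and X: "X \<in> GG sc"
  shows "f ` X \<in> GG sc"
proof -
  obtain h where h: "lin_map sc h" "range h = X" "{v. h v = 0} = X"
    using X unfolding GG_iff by blast
  have "range g = UNIV" using gf by (metis surj_def)
  then have "range (f \<circ> h \<circ> g) = f ` X" using h(2) by (metis image_comp)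
  moreover have "{v. (f \<circ> h \<circ> g) v = 0} = f ` X"
  proof -
    have "f w = 0 \<longleftrightarrow> w = 0" for w using gf[of w] gf[of 0] lin_map_0[OF f] by metis
    moreover have "v \<in> f ` X \<longleftrightarrow> g v \<in> X" for v using gf fg by (metis imageE image_eqI)
    ultimately show ?thesis using h(3) by auto
  qed
  ultimately show ?thesis
    unfolding GG_iff using lin_map_comp[OF lin_map_comp[OF f h(1)] g] by blast
qed

\<comment> \<open>Meaningful when \<open>V = H \<oplus> Ka\<close>: then \<open>coord H a u\<close> is the \<open>a\<close>-coefficient of \<open>u\<close>.\<close>
definition coord :: "'v set \<Rightarrow> 'v \<Rightarrow> 'v \<Rightarrow> 'k" where
  "coord H a u = (THE c. u - sc c a \<in> H)"

definition exchange_map :: "'v set \<Rightarrow> 'v \<Rightarrow> 'v \<Rightarrow> 'v \<Rightarrow> 'v" where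
  "exchange_map H a b u = u - sc (coord H a u) a + sc (coord H a u) b"

context
  fixes H a
  assumes H: "lsubspace sc H" and aH: "a \<notin> H" and UNIV_a: "UNIV = span_insert sc H a"
begin

lemma coord_eq:
  assumes "u - sc c a \<in> H"
  shows "coord H a u = c"
  unfolding coord_def
proof (rule the_equality)
  show "u - sc c a \<in> H" by fact
next
  fix d assume "u - sc d a \<in> H"
  then have "(u - sc d a) - (u - sc c a) \<in> H" using lsubspace_diff[OF H _ assms] by blast
  then have "0 + sc (c - d) a \<in> H" by (simp add: scale_left_diff_distrib)
  then have "c - d = 0" using span_insert_coeff_zero[OF H aH lsubspace_0[OF H]] by blast
  then show "d = c" by simp
qed

lemma coord_in: "u - sc (coord H a u) a \<in> H"
proof -
  obtain h c where "h \<in> H" "u = h + sc c a" using UNIV_a by (metis UNIV_I span_insertE)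
  then show ?thesis using coord_eq[of u c] by simp
qed

lemma coord_add: "coord H a (u + v) = coord H a u + coord H a v"
proof (rule coord_eq)
  have eq: "(u + v) - sc (coord H a u + coord H a v) a
      = (u - sc (coord H a u) a) + (v - sc (coord H a v) a)"
    by (simp add: scale_left_distrib algebra_simps)
  show "(u + v) - sc (coord H a u + coord H a v) a \<in> H"
    unfolding eq by (rule lsubspace_add[OF H coord_in coord_in])
qed

lemma coord_scale: "coord H a (sc k u) = k * coord H a u"
proof (rule coord_eq)
  have "sc k u - sc (k * coord H a u) a = sc k (u - sc (coord H a u) a)"
    by (simp add: scale_scale scale_right_diff_distrib)
  then show "sc k u - sc (k * coord H a u) a \<in> H" using lsubspace_scale[OF H coord_in] by simp
qed

lemma coord_of_mem: "m \<in> H \<Longrightarrow> coord H a m = 0"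
  by (rule coord_eq) simp

lemma coord_self: "coord H a a = 1"
  by (rule coord_eq) (simp add: lsubspace_0[OF H])

lemma lin_map_exchange_map: "lin_map sc (exchange_map H a b)"
  unfolding lin_map_def exchange_map_def coord_add coord_scale
  by (simp add: scale_left_distrib scale_right_distrib scale_scale scale_right_diff_distrib
      algebra_simps)

lemma exchange_map_fixes: "m \<in> H \<Longrightarrow> exchange_map H a b m = m"
  unfolding exchange_map_def using coord_of_mem by simp

lemma exchange_map_self: "exchange_map H a b a = b"
  unfolding exchange_map_def coord_self by simp

lemma exchange_map_span_insert:
  assumes "M \<subseteq> H"
  shows "exchange_map H a b ` span_insert sc M a = span_insert sc M b"
proof -
  have image: "exchange_map H a b (m + sc c a) = m + sc c b" if "m \<in> M" for m c
    using that assms lin_map_add[OF lin_map_exchange_map] lin_map_scale[OF lin_map_exchange_map]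
      exchange_map_fixes exchange_map_self by auto
  show ?thesis
  proof
    show "exchange_map H a b ` span_insert sc M a \<subseteq> span_insert sc M b"
      using image span_insertI by (auto elim!: span_insertE)
    show "span_insert sc M b \<subseteq> exchange_map H a b ` span_insert sc M a"
    proof
      fix w assume "w \<in> span_insert sc M b"
      then obtain m c where "m \<in> M" "w = m + sc c b" by (rule span_insertE)
      then show "w \<in> exchange_map H a b ` span_insert sc M a"
        using image span_insertI by (metis image_eqI)
    qed
  qed
qed

end

lemma exchange_map_inverse:
  assumes H: "lsubspace sc H" and "a \<notin> H" "b \<notin> H" "UNIV = span_insert sc H a"
  shows "exchange_map H b a (exchange_map H a b u) = u"
proof -
  have "UNIV = span_insert sc H b"
    using span_insert_exchange_eq[OF H _ assms(3)] assms(4) by blast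
  then have "coord H b (exchange_map H a b u) = coord H a u"
    using coord_eq[OF H assms(3)] coord_in[OF H assms(2,4)] unfolding exchange_map_def by simp
  then show ?thesis unfolding exchange_map_def by (simp add: algebra_simps)
qed

lemma GG_star_closed:
  assumes X: "X \<in> GG sc" and M: "lsubspace sc M" and MX: "codim1 sc M X" and ME: "codim1 sc M E"
  shows "E \<in> GG sc"
proof -
  obtain x where x: "x \<in> X" "x \<notin> M" "X = span_insert sc M x"
    using MX unfolding codim1_iff_span_insert by blast
  obtain v where v: "v \<in> E" "v \<notin> M" "E = span_insert sc M v"
    using ME unfolding codim1_iff_span_insert by blast
  show ?thesis
  proof (cases "v \<in> X")
    case True
    then show ?thesis using codim1_eq_span_insert[OF M MX _ v(2)] v(3) X by simp
  next
    case False
    have "x \<notin> span_insert sc M (v - x)"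
    proof
      assume "x \<in> span_insert sc M (v - x)"
      then have "v - x \<in> span_insert sc M x" using span_insert_exchange[OF M _ x(2)] by blast
      then have "(v - x) + x \<in> X"
        using lsubspace_add[OF lsubspace_span_insert[OF M] _ in_span_insert[OF M]] x(3) by blast
      then show False using False by simp
    qed
    \<comment> \<open>\<open>H\<close> contains \<open>M\<close> and \<open>v - x\<close>, so the map fixing \<open>H\<close> and sending \<open>x\<close> to \<open>v\<close>
      carries \<open>X\<close> onto \<open>E\<close>.\<close>
    then obtain H where H: "lsubspace sc H" "span_insert sc M (v - x) \<subseteq> H" "x \<notin> H"
        "UNIV = span_insert sc H x"
      using exists_hyperplane_avoiding[OF lsubspace_UNIV lsubspace_span_insert[OF M]] by blast
    have "v - x \<in> H" using H(2) in_span_insert[OF M] by blast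
    then have vH: "v \<notin> H" using lsubspace_diff[OF H(1), of v "v - x"] H(3) by auto
    have MH: "M \<subseteq> H" using H(2) subset_span_insert by blast
    have "exchange_map H x v ` X \<in> GG sc"
      by (rule GG_image_lin_iso[OF lin_map_exchange_map lin_map_exchange_map
            exchange_map_inverse exchange_map_inverse X])
        (use H(1,3,4) vH span_insert_exchange_eq[OF H(1) _ vH] in auto)
    then show ?thesis
      using exchange_map_span_insert[OF H(1,3,4) MH] x(3) v(3) by simp
  qed
qed

subsection \<open>Consequences of \<open>dim V > 2\<close>\<close>

lemma spanned_by_two_not_dim_gt_2:
  assumes "\<forall>w. \<exists>\<alpha> \<beta>. w = sc \<alpha> p + sc \<beta> q"
  shows "\<not> dim_gt_2 sc"
proof
  assume "dim_gt_2 sc"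
  then obtain u v w where indep: "\<And>a b c. sc a u + sc b v + sc c w = 0 \<Longrightarrow> a = 0 \<and> b = 0 \<and> c = 0"
    unfolding dim_gt_2_def by blast
  obtain a1 b1 a2 b2 a3 b3 where
    "u = sc a1 p + sc b1 q" "v = sc a2 p + sc b2 q" "w = sc a3 p + sc b3 q"
    using assms by meson
  moreover obtain \<alpha> \<beta> \<gamma> where nz: "\<not> (\<alpha> = 0 \<and> \<beta> = 0 \<and> \<gamma> = 0)"
    and "\<alpha> * a1 + \<beta> * a2 + \<gamma> * a3 = 0" "\<alpha> * b1 + \<beta> * b2 + \<gamma> * b3 = 0"
    using homogeneous_2x3_nontrivial_solution by blast
  ultimately have "sc \<alpha> u + sc \<beta> v + sc \<gamma> w = 0"
    by (simp add: scale_right_distrib scale_left_distrib[symmetric] scale_scale[symmetric]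
        algebra_simps)
  then show False using indep nz by blast
qed

lemma GG_not_subset_line:
  assumes d: "dim_gt_2 sc" and X: "X \<in> GG sc"
  shows "\<not> X \<subseteq> range (\<lambda>c. sc c p)"
proof
  assume Xp: "X \<subseteq> range (\<lambda>c. sc c p)"
  obtain f where f: "lin_map sc f" "range f = X" "{v. f v = 0} = X"
    using X unfolding GG_iff by blast
  show False
  proof (cases "p \<in> X")
    case True
    then obtain u where u: "f u = p" using f(2) by blast
    have "\<exists>\<alpha> \<beta>. w = sc \<alpha> u + sc \<beta> p" for w
    proof -
      obtain c where c: "f w = sc c p" using Xp f(2) by blast
      have "f (w - sc c u) = 0"
        using lin_map_add[OF f(1), of "w - sc c u" "sc c u"] lin_map_scale[OF f(1)] c u by simp
      then obtain d where "w - sc c u = sc d p" using Xp f(3) by blast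
      then have "w = sc c u + sc d p" by (simp add: algebra_simps)
      then show ?thesis by blast
    qed
    then show False using spanned_by_two_not_dim_gt_2 d by blast
  next
    case False
    have "X \<subseteq> {0}"
    proof
      fix x assume "x \<in> X"
      moreover obtain c where "x = sc c p" using Xp \<open>x \<in> X\<close> by blast
      ultimately show "x \<in> {0}"
        using lsubspace_scale_iff[OF GG_lsubspace[OF X]] False by (cases "c = 0") auto
    qed
    have "w = 0" for w :: 'v
    proof -
      have "f w = 0" using \<open>X \<subseteq> {0}\<close> f(2) by blast
      then show "w = 0" using \<open>X \<subseteq> {0}\<close> f(3) by blast
    qed
    then have "\<forall>w. \<exists>\<alpha> \<beta>. w = sc \<alpha> p + sc \<beta> p" by (metis add.right_neutral scale_zero_left)
    then show False using spanned_by_two_not_dim_gt_2 d by blast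
  qed
qed

lemma GG_nonzero:
  assumes "dim_gt_2 sc" "X \<in> GG sc"
  shows "\<exists>x\<in>X. x \<noteq> 0"
proof (rule ccontr)
  assume "\<not> (\<exists>x\<in>X. x \<noteq> 0)"
  then have "X \<subseteq> range (\<lambda>c. sc c 0)" by auto
  then show False using GG_not_subset_line[OF assms] by blast
qed

lemma GG_ne_UNIV:
  assumes "dim_gt_2 sc" "X \<in> GG sc"
  shows "X \<noteq> UNIV"
proof
  assume "X = UNIV"
  moreover obtain f where f: "range f = X" "{v. f v = 0} = X"
    using assms(2) unfolding GG_iff by blast
  ultimately have "\<forall>v. f v = 0" by (metis UNIV_I mem_Collect_eq)
  then have "X \<subseteq> {0}" using f(1) by auto
  then show False using GG_nonzero[OF assms] by blast
qed

lemma GG_not_hyperplane: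
  assumes d: "dim_gt_2 sc" and X: "X \<in> GG sc"
  shows "UNIV \<noteq> span_insert sc X m"
proof
  assume U: "UNIV = span_insert sc X m"
  obtain f where f: "lin_map sc f" "range f = X" "{v. f v = 0} = X"
    using X unfolding GG_iff by blast
  have "X \<subseteq> range (\<lambda>c. sc c (f m))"
  proof
    fix y assume "y \<in> X"
    then obtain w where y: "y = f w" using f(2) by blast
    obtain x c where "x \<in> X" "w = x + sc c m" using U by (metis UNIV_I span_insertE)
    moreover have "f x = 0" using f(3) \<open>x \<in> X\<close> by blast
    ultimately have "y = sc c (f m)" using y lin_map_add[OF f(1)] lin_map_scale[OF f(1)] by simp
    then show "y \<in> range (\<lambda>c. sc c (f m))" by blast
  qed
  then show False using GG_not_subset_line[OF d X] by blast
qed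

subsection \<open>Stars, tops and maximal cliques\<close>

lemma codim1_ssum_star:
  assumes M: "lsubspace sc M" and E1: "codim1 sc M E1" and E2: "codim1 sc M E2" and "E1 \<noteq> E2"
  shows "codim1 sc E1 (ssum E1 E2)"
proof -
  obtain v where v: "v \<in> E2" "v \<notin> M" "E2 = span_insert sc M v"
    using E2 unfolding codim1_iff_span_insert by blast
  have E1s: "lsubspace sc E1" using codim1_lsubspace[OF M E1] .
  have vE1: "v \<notin> E1" using codim1_eq_span_insert[OF M E1 _ v(2)] v(3) assms(4) by blast
  have "ssum E1 E2 = span_insert sc E1 v"
  proof
    have "M \<subseteq> span_insert sc E1 v" using E1 subset_span_insert unfolding codim1_def by blast
    then have "E2 \<subseteq> span_insert sc E1 v"
      using v(3) span_insert_least[OF lsubspace_span_insert[OF E1s] _ in_span_insert[OF E1s]] by blast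
    then show "ssum E1 E2 \<subseteq> span_insert sc E1 v"
      using ssum_least[OF lsubspace_span_insert[OF E1s] subset_span_insert] by blast
    show "span_insert sc E1 v \<subseteq> ssum E1 E2"
      using span_insert_least[OF lsubspace_ssum[OF E1s codim1_lsubspace[OF M E2]]
          ssum_upper1[OF codim1_lsubspace[OF M E2]]] ssum_upper2[OF E1s] v(1) by blast
  qed
  then show ?thesis using codim1_span_insert[OF E1s vE1] by simp
qed

lemma adjacent_star:
  assumes "lsubspace sc M" "codim1 sc M E1" "codim1 sc M E2" "E1 \<noteq> E2"
  shows "adjacent sc E1 E2"
  unfolding adjacent_def
  using codim1_ssum_star[OF assms] codim1_ssum_star[OF assms(1,3,2)] assms(4) ssum_commute[of E1 E2]
  by metis

lemma codim1_ssum_top: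
  assumes E1: "lsubspace sc E1" "codim1 sc E1 N" and E2: "lsubspace sc E2" "codim1 sc E2 N"
    and "E1 \<noteq> E2"
  shows "codim1 sc E1 (ssum E1 E2)"
proof -
  have N: "lsubspace sc N" using codim1_lsubspace[OF E1] .
  have "\<not> E2 \<subseteq> E1"
  proof
    assume sub: "E2 \<subseteq> E1"
    then obtain w where "w \<in> E1" "w \<notin> E2" using assms(5) by blast
    then have "E1 = N" using codim1_no_between[OF E2 E1(1) sub] E1(2) unfolding codim1_def by blast
    then show False using E1(2) unfolding codim1_def by blast
  qed
  then obtain w where w: "w \<in> E2" "w \<notin> E1" by blast
  have "ssum E1 E2 \<subseteq> N" using ssum_least[OF N] E1(2) E2(2) unfolding codim1_def by blast
  then have "ssum E1 E2 = N"
    using codim1_no_between[OF E1 lsubspace_ssum[OF E1(1) E2(1)] ssum_upper1[OF E2(1)] _ _ w(2)]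
      ssum_upper2[OF E1(1)] w(1) by blast
  then show ?thesis using E1(2) by simp
qed

lemma adjacent_top:
  assumes "lsubspace sc E1" "codim1 sc E1 N" "lsubspace sc E2" "codim1 sc E2 N" "E1 \<noteq> E2"
  shows "adjacent sc E1 E2"
  unfolding adjacent_def
  using codim1_ssum_top[OF assms] codim1_ssum_top[OF assms(3,4,1,2)] assms(5) ssum_commute[of E1 E2]
  by metis

lemma GG_top_closed:
  assumes X: "X \<in> GG sc" and XN: "codim1 sc X N" and E: "lsubspace sc E" "codim1 sc E N"
  shows "E \<in> GG sc"
proof (cases "E = X")
  case False
  have Xs: "lsubspace sc X" using GG_lsubspace[OF X] .
  have adj: "adjacent sc X E" using adjacent_top[OF Xs XN E] False by metis
  have "codim1 sc (E \<inter> X) E" using adjacent_codim1_Int[OF E(1) Xs adjacent_sym[OF adj]] .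
  then show ?thesis
    using GG_star_closed[OF X lsubspace_Int[OF Xs E(1)] adjacent_codim1_Int[OF Xs E(1) adj]]
    by (simp add: Int_commute)
qed (use X in simp)

lemma adj_clique_star:
  assumes "star_base sc M"
  shows "adj_clique sc (star sc M)"
proof -
  obtain X where M: "lsubspace sc M" and X: "X \<in> GG sc" "codim1 sc M X"
    using assms unfolding star_base_def by blast
  show ?thesis
    unfolding adj_clique_def star_def using GG_star_closed[OF X(1) M X(2)] adjacent_star[OF M]
    by blast
qed

lemma adj_clique_top:
  assumes "top_base sc N"
  shows "adj_clique sc (topset sc N)"
proof -
  obtain X where X: "X \<in> GG sc" "codim1 sc X N" using assms unfolding top_base_def by blast
  show ?thesis
    unfolding adj_clique_def topset_def using GG_top_closed[OF X] adjacent_top by blast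
qed

lemma GG_exists_adjacent:
  assumes d: "dim_gt_2 sc" and X: "X \<in> GG sc"
  shows "\<exists>E\<in>GG sc. E \<noteq> X \<and> adjacent sc X E"
proof -
  have Xs: "lsubspace sc X" using GG_lsubspace[OF X] .
  obtain x where x: "x \<in> X" "x \<noteq> 0" using GG_nonzero[OF d X] by blast
  then obtain M where M: "lsubspace sc M" "M \<subseteq> X" "x \<notin> M" "X = span_insert sc M x"
    using exists_hyperplane_avoiding[OF Xs lsubspace_zero] lsubspace_0[OF Xs] by blast
  have MX: "codim1 sc M X" using codim1_span_insert[OF M(1,3)] M(4) by simp
  obtain v where "v \<notin> X" using GG_ne_UNIV[OF d X] by blast
  then have "v \<notin> M" "span_insert sc M v \<noteq> X" using M(2) in_span_insert[OF M(1)] by blast+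
  then show ?thesis
    using GG_star_closed[OF X M(1) MX] adjacent_star[OF M(1) MX] codim1_span_insert[OF M(1)] by metis
qed

lemma codim1_of_adjacent_star:
  assumes M: "lsubspace sc M" and X: "lsubspace sc X" and Z: "lsubspace sc Z"
    and MX: "codim1 sc M X" and MZ: "M \<subseteq> Z" and adj: "adjacent sc X Z"
  shows "codim1 sc M Z"
proof -
  have "Z \<inter> X = M"
  proof (rule ccontr)
    assume "Z \<inter> X \<noteq> M"
    moreover have "M \<subseteq> Z \<inter> X" using MZ MX unfolding codim1_def by blast
    ultimately obtain w where "w \<in> Z \<inter> X" "w \<notin> M" by blast
    then have "Z \<inter> X = X" using codim1_no_between[OF M MX lsubspace_Int[OF Z X] \<open>M \<subseteq> Z \<inter> X\<close>] by blast
    then show False using adjacent_not_subset[OF Z adj] by blast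
  qed
  then show ?thesis using adjacent_codim1_Int[OF Z X adjacent_sym[OF adj]] by simp
qed

lemma codim1_of_adjacent_top:
  assumes X: "lsubspace sc X" and Z: "lsubspace sc Z" and XN: "codim1 sc X N"
    and ZN: "Z \<subseteq> N" and adj: "adjacent sc X Z"
  shows "codim1 sc Z N"
proof -
  have N: "lsubspace sc N" using codim1_lsubspace[OF X XN] .
  obtain w where w: "w \<in> Z" "w \<notin> X" using adjacent_not_subset[OF X adjacent_sym[OF adj]] by blast
  have "ssum X Z \<subseteq> N" using ssum_least[OF N] XN ZN unfolding codim1_def by blast
  then have "ssum X Z = N"
    using codim1_no_between[OF X XN lsubspace_ssum[OF X Z] ssum_upper1[OF Z] _ _ w(2)]
      ssum_upper2[OF X] w(1) by blast
  then show ?thesis using adj unfolding adjacent_def by simp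
qed

lemma adjacent_triangle:
  assumes X: "lsubspace sc X" and Y: "lsubspace sc Y" and Z: "lsubspace sc Z"
    and XY: "adjacent sc X Y" and XZ: "adjacent sc X Z" and YZ: "adjacent sc Y Z"
  shows "X \<inter> Y \<subseteq> Z \<or> Z \<subseteq> ssum X Y"
proof (rule ccontr)
  assume "\<not> (X \<inter> Y \<subseteq> Z \<or> Z \<subseteq> ssum X Y)"
  then obtain m z where m: "m \<in> X" "m \<in> Y" "m \<notin> Z" and z: "z \<in> Z" "z \<notin> ssum X Y" by blast
  let ?B = "Y \<inter> Z"
  have B: "lsubspace sc ?B" using lsubspace_Int[OF Y Z] .
  have "\<not> ?B \<subseteq> X"
  proof
    assume BX: "?B \<subseteq> X"
    have "Y = span_insert sc ?B m"
      using codim1_eq_span_insert[OF B adjacent_codim1_Int[OF Y Z YZ]] m by blast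
    then have "Y \<subseteq> X" using span_insert_least[OF X BX m(1)] by blast
    then show False using adjacent_not_subset[OF X adjacent_sym[OF XY]] by blast
  qed
  then obtain b where b: "b \<in> Y" "b \<in> Z" "b \<notin> X" by blast
  have "z \<in> span_insert sc X b"
    using adjacent_ssum_eq[OF X Z XZ b(2,3)] ssum_upper2[OF X] z(1) by blast
  moreover have "span_insert sc X b \<subseteq> ssum X Y"
    using span_insert_least[OF lsubspace_ssum[OF X Y] ssum_upper1[OF Y]] ssum_upper2[OF X] b(1)
    by blast
  ultimately show False using z(2) by blast
qed

lemma adjacent_star_top_incompatible:
  assumes X: "lsubspace sc X" and Y: "lsubspace sc Y" and Z: "lsubspace sc Z"
    and Z': "lsubspace sc Z'"
    and XY: "adjacent sc X Y" and XZ: "adjacent sc X Z" and XZ': "adjacent sc X Z'"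
    and ZZ': "adjacent sc Z Z'"
    and ZN: "Z \<subseteq> ssum X Y" and MZ: "\<not> X \<inter> Y \<subseteq> Z"
    and MZ': "X \<inter> Y \<subseteq> Z'" and Z'N: "\<not> Z' \<subseteq> ssum X Y"
  shows False
proof -
  let ?M = "X \<inter> Y" and ?N = "ssum X Y"
  have M: "lsubspace sc ?M" using lsubspace_Int[OF X Y] .
  have N: "lsubspace sc ?N" using lsubspace_ssum[OF X Y] .
  have MX: "codim1 sc ?M X" using adjacent_codim1_Int[OF X Y XY] .
  have XN: "codim1 sc X ?N" using XY unfolding adjacent_def by blast
  have MN: "?M \<subseteq> ?N" using ssum_upper1[OF Y] by blast
  obtain z' where z': "z' \<in> Z'" "z' \<notin> ?N" using Z'N by blast
  have "z' \<notin> ?M" using z'(2) MN by blast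
  then have Z'_eq: "Z' = span_insert sc ?M z'"
    using codim1_eq_span_insert[OF M codim1_of_adjacent_star[OF M X Z' MX MZ' XZ'] z'(1)] by blast
  obtain u where u: "u \<in> Z" "u \<notin> Z'" using adjacent_not_subset[OF Z' ZZ'] by blast
  have uN: "u \<in> ?N" using u(1) ZN by blast
  \<comment> \<open>The \<open>z'\<close>-coordinate of any vector of \<open>Z \<subseteq> N\<close> vanishes because \<open>z' \<notin> N\<close>.\<close>
  have Z_sub: "Z \<subseteq> span_insert sc ?M u"
  proof
    fix x assume x: "x \<in> Z"
    then have "x \<in> span_insert sc Z' u"
      using adjacent_ssum_eq[OF Z' Z adjacent_sym[OF ZZ'] u] ssum_upper2[OF Z'] by blast
    then obtain y b where yb: "y \<in> Z'" "x = y + sc b u" by (rule span_insertE)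
    obtain m a where ma: "m \<in> ?M" "y = m + sc a z'" using yb(1) Z'_eq by (metis span_insertE)
    have "sc a z' = x - m - sc b u" using yb(2) ma(2) by (simp add: algebra_simps)
    moreover have "x - m \<in> ?N" using lsubspace_diff[OF N] x ZN ma(1) MN by blast
    then have "x - m - sc b u \<in> ?N" using lsubspace_diff[OF N _ lsubspace_scale[OF N uN]] by blast
    ultimately have "0 + sc a z' \<in> ?N" by simp
    then have "a = 0" using span_insert_coeff_zero[OF N z'(2) lsubspace_0[OF N]] by blast
    then show "x \<in> span_insert sc ?M u" using yb(2) ma span_insertI by simp
  qed
  obtain m where m: "m \<in> ?M" "m \<notin> Z" using MZ by blast
  have N_eq: "span_insert sc ?M u = ?N"
    using codim1_no_between[OF Z codim1_of_adjacent_top[OF X Z XN ZN XZ] lsubspace_span_insert[OF M]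
        Z_sub span_insert_least[OF N MN uN] _ m(2)] subset_span_insert m(1) by blast
  obtain x where x: "x \<in> X" "x \<notin> ?M" using adjacent_not_subset[OF Y XY] by blast
  then have "x \<in> span_insert sc ?M u" using N_eq ssum_upper1[OF Y] by blast
  then have "X = ?N"
    using codim1_eq_span_insert[OF M MX x] span_insert_exchange_eq[OF M _ x(2)] N_eq by metis
  then show False using XN unfolding codim1_def by blast
qed

lemma adj_clique_Int_subset_or_subset_ssum:
  assumes C: "adj_clique sc C" and XC: "X \<in> C" and YC: "Y \<in> C" and "X \<noteq> Y"
  shows "(\<forall>Z\<in>C. X \<inter> Y \<subseteq> Z) \<or> (\<forall>Z\<in>C. Z \<subseteq> ssum X Y)"
proof -
  have sub: "lsubspace sc Z" if "Z \<in> C" for Z using that C GG_lsubspace unfolding adj_clique_def by blast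
  have adj: "adjacent sc Z Z'" if "Z \<in> C" "Z' \<in> C" "Z \<noteq> Z'" for Z Z'
    using that C unfolding adj_clique_def by blast
  have dich: "X \<inter> Y \<subseteq> Z \<or> Z \<subseteq> ssum X Y" if "Z \<in> C" for Z
  proof (cases "Z = X \<or> Z = Y")
    case True
    then show ?thesis using ssum_upper1[OF sub[OF YC]] by blast
  next
    case False
    then show ?thesis
      using adjacent_triangle[OF sub[OF XC] sub[OF YC] sub[OF that]] adj XC YC that assms(4) by metis
  qed
  show ?thesis
  proof (rule ccontr)
    assume "\<not> ?thesis"
    then obtain Z Z' where ZC: "Z \<in> C" "\<not> X \<inter> Y \<subseteq> Z" and Z'C: "Z' \<in> C" "\<not> Z' \<subseteq> ssum X Y"
      by blast
    have "Z \<noteq> X" "Z' \<noteq> X" "Z \<noteq> Z'" using ZC Z'C dich ssum_upper1[OF sub[OF YC]] by blast+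
    then show False
      using adjacent_star_top_incompatible[OF sub[OF XC] sub[OF YC] sub[OF ZC(1)] sub[OF Z'C(1)]]
        adj XC YC ZC Z'C dich assms(4) by metis
  qed
qed

lemma adj_clique_subset_star_or_top:
  assumes C: "adj_clique sc C" and XC: "X \<in> C" and YC: "Y \<in> C" and XY: "X \<noteq> Y"
  shows "star_base sc (X \<inter> Y) \<and> C \<subseteq> star sc (X \<inter> Y) \<or>
    top_base sc (ssum X Y) \<and> C \<subseteq> topset sc (ssum X Y)"
proof -
  have sub: "lsubspace sc Z" if "Z \<in> C" for Z using that C GG_lsubspace unfolding adj_clique_def by blast
  have adj: "adjacent sc X Z" if "Z \<in> C" "Z \<noteq> X" for Z
    using that C XC unfolding adj_clique_def by blast
  have XG: "X \<in> GG sc" using C XC unfolding adj_clique_def by blast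
  have MX: "codim1 sc (X \<inter> Y) X" using adjacent_codim1_Int[OF sub[OF XC] sub[OF YC] adj[OF YC]] XY
    by blast
  have XN: "codim1 sc X (ssum X Y)" using adj[OF YC] XY unfolding adjacent_def by blast
  consider "\<forall>Z\<in>C. X \<inter> Y \<subseteq> Z" | "\<forall>Z\<in>C. Z \<subseteq> ssum X Y"
    using adj_clique_Int_subset_or_subset_ssum[OF assms] by blast
  then show ?thesis
  proof cases
    case 1
    have "codim1 sc (X \<inter> Y) Z" if "Z \<in> C" for Z
      using MX codim1_of_adjacent_star[OF lsubspace_Int[OF sub[OF XC] sub[OF YC]] sub[OF XC] sub[OF that]]
        1 that adj by (cases "Z = X") auto
    then show ?thesis
      unfolding star_base_def star_def
      using lsubspace_Int[OF sub[OF XC] sub[OF YC]] XG MX sub by blast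
  next
    case 2
    have "codim1 sc Z (ssum X Y)" if "Z \<in> C" for Z
      using XN codim1_of_adjacent_top[OF sub[OF XC] sub[OF that] XN] 2 that adj by (cases "Z = X") auto
    then show ?thesis
      unfolding top_base_def topset_def
      using lsubspace_ssum[OF sub[OF XC] sub[OF YC]] XG XN sub by blast
  qed
qed

lemma Inter_topset_zero:
  assumes N: "lsubspace sc N" and "w \<in> N" and "\<And>E. E \<in> topset sc N \<Longrightarrow> w \<in> E"
  shows "w = 0"
proof (rule ccontr)
  assume "w \<noteq> 0"
  then obtain H where H: "lsubspace sc H" "w \<notin> H" "N = span_insert sc H w"
    using exists_hyperplane_avoiding[OF N lsubspace_zero _ assms(2)] lsubspace_0[OF N] by blast
  then have "H \<in> topset sc N" using codim1_span_insert[OF H(1,2)] unfolding topset_def by simp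
  then show False using assms(3) H(2) by blast
qed

lemma adjacent_to_star_mem:
  assumes M: "star_base sc M" and d: "dim_gt_2 sc" and Y: "Y \<in> GG sc"
    and adjY: "\<And>E. E \<in> star sc M \<Longrightarrow> Y \<noteq> E \<Longrightarrow> adjacent sc Y E"
  shows "Y \<in> star sc M"
proof (rule ccontr)
  assume nY: "Y \<notin> star sc M"
  obtain X where Ms: "lsubspace sc M" and X: "X \<in> GG sc" and MX: "codim1 sc M X"
    using M unfolding star_base_def by blast
  have Ys: "lsubspace sc Y" and Xs: "lsubspace sc X" using GG_lsubspace Y X by blast+
  have XS: "X \<in> star sc M" using Xs MX unfolding star_def by blast
  have adjX: "adjacent sc Y X" using adjY[OF XS] nY XS by blast
  show False
  proof (cases "M \<subseteq> Y")
    case True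
    then show False
      using codim1_of_adjacent_star[OF Ms Xs Ys MX True adjacent_sym[OF adjX]] nY Ys
      unfolding star_def by blast
  next
    case False
    then obtain m where m: "m \<in> M" "m \<notin> Y" by blast
    have mX: "m \<in> X" using m(1) MX unfolding codim1_def by blast
    \<comment> \<open>Every vector lies in some member of the star, whose sum with \<open>Y\<close> is \<open>Y + Km\<close>.\<close>
    have "v \<in> span_insert sc Y m" for v
    proof (cases "v \<in> M")
      case True
      then have "v \<in> ssum Y X" using MX ssum_upper2[OF Ys] unfolding codim1_def by blast
      then show ?thesis using adjacent_ssum_eq[OF Ys Xs adjX mX m(2)] by simp
    next
      case False
      let ?E = "span_insert sc M v"
      have ES: "?E \<in> star sc M"
        using codim1_span_insert[OF Ms False] lsubspace_span_insert[OF Ms] unfolding star_def by blast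
      have "adjacent sc Y ?E" using adjY[OF ES] nY ES by blast
      moreover have "m \<in> ?E" using m(1) subset_span_insert by blast
      ultimately have "ssum Y ?E = span_insert sc Y m"
        using adjacent_ssum_eq[OF Ys lsubspace_span_insert[OF Ms] _ _ m(2)] by blast
      then show ?thesis using ssum_upper2[OF Ys] in_span_insert[OF Ms] by blast
    qed
    then show False using GG_not_hyperplane[OF d Y] by blast
  qed
qed

lemma adjacent_to_top_mem:
  assumes N: "top_base sc N" and d: "dim_gt_2 sc" and Y: "Y \<in> GG sc"
    and adjY: "\<And>E. E \<in> topset sc N \<Longrightarrow> Y \<noteq> E \<Longrightarrow> adjacent sc Y E"
  shows "Y \<in> topset sc N"
proof (rule ccontr)
  assume nY: "Y \<notin> topset sc N"
  obtain X where Ns: "lsubspace sc N" and X: "X \<in> GG sc" and XN: "codim1 sc X N"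
    using N unfolding top_base_def by blast
  have Ys: "lsubspace sc Y" and Xs: "lsubspace sc X" using GG_lsubspace Y X by blast+
  have XT: "X \<in> topset sc N" using Xs XN unfolding topset_def by blast
  have adjX: "adjacent sc Y X" using adjY[OF XT] nY XT by blast
  show False
  proof (cases "Y \<subseteq> N")
    case True
    then show False
      using codim1_of_adjacent_top[OF Xs Ys XN True adjacent_sym[OF adjX]] nY Ys
      unfolding topset_def by blast
  next
    case False
    then obtain y where y: "y \<in> Y" "y \<notin> N" by blast
    \<comment> \<open>\<open>Y \<inter> N\<close> lies in every hyperplane of \<open>N\<close>, hence is zero, so \<open>Y\<close> is a line.\<close>
    have YN_sub: "Y \<inter> N \<subseteq> E" if ET: "E \<in> topset sc N" for E
    proof
      fix z assume z: "z \<in> Y \<inter> N"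
      have E: "lsubspace sc E" "codim1 sc E N" using ET unfolding topset_def by auto
      have EN: "E \<subseteq> N" using E(2) unfolding codim1_def by blast
      have "adjacent sc E Y" using adjY[OF ET] nY ET adjacent_sym by blast
      moreover have "y \<notin> E" using y(2) EN by blast
      ultimately have "ssum E Y = span_insert sc E y" using adjacent_ssum_eq[OF E(1) Ys _ y(1)] by blast
      then have "z \<in> span_insert sc E y" using ssum_upper2[OF E(1)] z by blast
      then obtain e c where ec: "e \<in> E" "z = e + sc c y" by (rule span_insertE)
      then have "0 + sc c y \<in> N" using lsubspace_diff[OF Ns, of z e] z EN by auto
      then have "c = 0" using span_insert_coeff_zero[OF Ns y(2) lsubspace_0[OF Ns]] by blast
      then show "z \<in> E" using ec by simp
    qed
    have "Y \<inter> N \<subseteq> {0}" using Inter_topset_zero[OF Ns] YN_sub by blast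
    have "Y \<subseteq> range (\<lambda>c. sc c y)"
    proof
      fix z assume z: "z \<in> Y"
      have "y \<notin> X" using y(2) XN unfolding codim1_def by blast
      then have "ssum X Y = span_insert sc X y"
        using adjacent_ssum_eq[OF Xs Ys adjacent_sym[OF adjX] y(1)] by blast
      then have "z \<in> span_insert sc X y" using ssum_upper2[OF Xs] z by blast
      then obtain e c where ec: "e \<in> X" "z = e + sc c y" by (rule span_insertE)
      then have "e \<in> Y" using lsubspace_diff[OF Ys z lsubspace_scale[OF Ys y(1)], of c] by simp
      then have "e = 0" using \<open>Y \<inter> N \<subseteq> {0}\<close> ec(1) XN unfolding codim1_def by blast
      then show "z \<in> range (\<lambda>c. sc c y)" using ec by simp
    qed
    then show False using GG_not_subset_line[OF d Y] by blast
  qed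
qed

lemma max_adj_cliqueI:
  assumes "adj_clique sc C"
    and "\<And>Y. Y \<in> GG sc \<Longrightarrow> (\<And>E. E \<in> C \<Longrightarrow> Y \<noteq> E \<Longrightarrow> adjacent sc Y E) \<Longrightarrow> Y \<in> C"
  shows "max_adj_clique sc C"
  unfolding max_adj_clique_def
proof (intro conjI allI impI)
  fix D assume D: "adj_clique sc D \<and> C \<subseteq> D"
  have "Y \<in> C" if "Y \<in> D" for Y
    using assms(2)[of Y] D that unfolding adj_clique_def by blast
  then show "D = C" using D by blast
qed (rule assms(1))

lemma max_adj_clique_star:
  assumes "star_base sc M" "dim_gt_2 sc"
  shows "max_adj_clique sc (star sc M)"
  by (rule max_adj_cliqueI[OF adj_clique_star[OF assms(1)] adjacent_to_star_mem[OF assms]])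

lemma max_adj_clique_top:
  assumes "top_base sc N" "dim_gt_2 sc"
  shows "max_adj_clique sc (topset sc N)"
  by (rule max_adj_cliqueI[OF adj_clique_top[OF assms(1)] adjacent_to_top_mem[OF assms]])

lemma max_adj_clique_star_or_top:
  assumes d: "dim_gt_2 sc" and ne: "GG sc \<noteq> {}" and C: "max_adj_clique sc C"
  shows "(\<exists>M. star_base sc M \<and> C = star sc M) \<or> (\<exists>N. top_base sc N \<and> C = topset sc N)"
proof -
  have Cc: "adj_clique sc C" and Cmax: "\<And>D. adj_clique sc D \<Longrightarrow> C \<subseteq> D \<Longrightarrow> D = C"
    using C unfolding max_adj_clique_def by blast+
  obtain X where XC: "X \<in> C"
  proof (cases "C = {}")
    case True
    obtain X where "X \<in> GG sc" using ne by blast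
    then have "adj_clique sc {X}" unfolding adj_clique_def by blast
    then show ?thesis using Cmax True by blast
  qed blast
  have XG: "X \<in> GG sc" using XC Cc unfolding adj_clique_def by blast
  obtain Y where YC: "Y \<in> C" and XY: "X \<noteq> Y"
  proof (rule ccontr)
    assume "\<not> thesis"
    then have "C = {X}" using that XC by blast
    moreover obtain E where "E \<in> GG sc" "E \<noteq> X" "adjacent sc X E"
      using GG_exists_adjacent[OF d XG] by blast
    moreover have "adj_clique sc {X, E}"
      using XG \<open>E \<in> GG sc\<close> \<open>adjacent sc X E\<close> adjacent_sym unfolding adj_clique_def by blast
    ultimately show False using Cmax[of "{X, E}"] \<open>E \<noteq> X\<close> by blast
  qed
  from adj_clique_subset_star_or_top[OF Cc XC YC XY] show ?thesis
  proof
    assume "star_base sc (X \<inter> Y) \<and> C \<subseteq> star sc (X \<inter> Y)"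
    then show ?thesis using Cmax adj_clique_star by metis
  next
    assume "top_base sc (ssum X Y) \<and> C \<subseteq> topset sc (ssum X Y)"
    then show ?thesis using Cmax adj_clique_top by metis
  qed
qed

end

theorem proposition2p4:
  fixes sc :: "'k::division_ring \<Rightarrow> 'v::ab_group_add \<Rightarrow> 'v"
  assumes "left_vector_space sc"
    and "dim_gt_2 sc"
    and "GG sc \<noteq> {}"
  shows "max_adj_clique sc C \<longleftrightarrow>
           (\<exists>M. star_base sc M \<and> C = star sc M) \<or> (\<exists>N. top_base sc N \<and> C = topset sc N)"
proof -
  interpret lvspace sc by (rule lvspace.intro) (rule assms(1))
  show ?thesis
    using max_adj_clique_star_or_top[OF assms(2,3)] max_adj_clique_star[OF _ assms(2)]
      max_adj_clique_top[OF _ assms(2)] by blast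
qed

end
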